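(* Let $T$ be a phylogenetic tree with leaf set $X$ and nonnegative branch lengths. For $A\subseteq X$ let $\delta_A$ denote the phylogenetic diversity of $A$, i.e. the sum of the branch lengths of the smallest subtree of $T$ connecting the leaves in $A$ (with $\delta_A=0$ if $|A|\le 1$). Then: \begin{enumerate} \item For all $A\subseteq X$, $\displaystyle \delta_A=\sum_{B\subseteq A}(-1)^{|B|}\delta_B$ (the sum including $B=\emptyset$ and $B=A$). \item For all $A\subseteq X$ of odd cardinality, $\displaystyle \delta_A=\sum_{\substack{B\subset A\\ |B|\text{ even}}}\frac{\mathbb{T}_{|A|-|B|}}{2^{|A|-|B|}}\,\delta_B$. \end{enumerate}
   Context: The tangent numbers $\mathbb{T}_k$ are defined by the power series $\tanh(x)=\sum_{k=0}^\infty \mathbb{T}_k\,\frac{x^k}{k!}$. A phylogenetic tree with leaf set $X$ is a tree whose leaves are bijectively labelled by $X$. *)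

theory Defs
  imports "HOL-Analysis.Analysis"
begin

definition reach :: "'v set set \<Rightarrow> 'v \<Rightarrow> 'v \<Rightarrow> bool" where
  "reach F = (\<lambda>u v. {u, v} \<in> F)\<^sup>*\<^sup>*"

definition is_tree :: "'v set \<Rightarrow> 'v set set \<Rightarrow> bool" where
  "is_tree V E \<longleftrightarrow> finite V \<and> V \<noteq> {} \<and>
     (\<forall>e\<in>E. \<exists>u v. e = {u, v} \<and> u \<noteq> v \<and> u \<in> V \<and> v \<in> V) \<and>
     (\<forall>u\<in>V. \<forall>v\<in>V. reach E u v) \<and>
     (\<forall>e\<in>E. \<forall>u v. e = {u, v} \<longrightarrow> \<not> reach (E - {e}) u v)"
  \<comment> \<open>finite, connected, and minimally connected (every edge is a bridge), i.e. acyclic\<close>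

definition leaves :: "'v set \<Rightarrow> 'v set set \<Rightarrow> 'v set" where
  "leaves V E = {v \<in> V. card {e \<in> E. v \<in> e} \<le> 1}"

text \<open>Edge set of the smallest subtree of T connecting the vertex set S: the intersection
  of all edge sets connecting every pair of vertices of S (empty when card S \<le> 1).\<close>

definition span_edges :: "'v set set \<Rightarrow> 'v set \<Rightarrow> 'v set set" where
  "span_edges E S = \<Inter>{F. F \<subseteq> E \<and> (\<forall>a\<in>S. \<forall>b\<in>S. reach F a b)}"

definition PD :: "'v set set \<Rightarrow> ('v set \<Rightarrow> real) \<Rightarrow> ('x \<Rightarrow> 'v) \<Rightarrow> 'x set \<Rightarrow> real" where
  "PD E w phi A = (\<Sum>e\<in>span_edges E (phi ` A). w e)"

text \<open>Tangent numbers: tanh x = sum_k T_k x^k / k!, so T_k is the k-th derivative of tanh at 0.\<close>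

definition tangent_number :: "nat \<Rightarrow> real" where
  "tangent_number k = (deriv ^^ k) (tanh :: real \<Rightarrow> real) 0"

end

theory Submission
  imports Defs "HOL-Computational_Algebra.Polynomial"
begin

text \<open>Removing an edge e of a connected graph splits the vertices into the side Q e of one
  endpoint and the rest; e lies on the subtree spanning a set of leaves exactly when that set meets
  both sides. Hence PD A is the w-weighted sum over edges of the indicator that A is split by Q e,
  and both identities reduce to identities for this indicator, valid for every set Q.
  By inclusion-exclusion, any sum over B \<subseteq> A of a function of card B times the indicator is a
  combination of binomial sums over A, A \<inter> Q and A - Q. The alternating case is then immediate.
  For the tangent case, the needed binomial convolutions of c k = tangent_number k / 2 ^ k are
  Taylor coefficients at 0 of tanh ((x + y) / 2) (cosh x + cosh y) = sinh x + sinh y, since c k is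
  the k-th derivative of tanh (x / 2) at 0. Neither acyclicity of T nor nonnegativity of the
  branch lengths is used.\<close>

section \<open>Sequences of successive derivatives\<close>

definition deriv_seq :: "(nat \<Rightarrow> real \<Rightarrow> real) \<Rightarrow> bool" where
  "deriv_seq F \<longleftrightarrow> (\<forall>k x. (F k has_real_derivative F (Suc k) x) (at x))"

lemma deriv_seqD: "deriv_seq F \<Longrightarrow> (F k has_real_derivative F (Suc k) x) (at x)"
  by (simp add: deriv_seq_def)

lemma deriv_seq_funpow_deriv: "deriv_seq F \<Longrightarrow> (deriv ^^ k) (F 0) = F k"
proof (induction k)
  case (Suc k)
  have "deriv (F k) = F (Suc k)"
    using deriv_seqD[OF Suc.prems] by (intro ext DERIV_imp_deriv)
  with Suc show ?case by simp
qed simp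

lemma deriv_seq_unique: "deriv_seq F \<Longrightarrow> deriv_seq G \<Longrightarrow> F 0 = G 0 \<Longrightarrow> F k = G k"
  using deriv_seq_funpow_deriv[of F k] deriv_seq_funpow_deriv[of G k] by simp

lemma deriv_seq_const: "deriv_seq (\<lambda>k x. if k = 0 then c else 0)"
  unfolding deriv_seq_def by (auto intro: derivative_eq_intros)

lemma deriv_seq_cosh: "deriv_seq (\<lambda>k x. if even k then cosh x else sinh x)"
  unfolding deriv_seq_def by (auto intro!: derivative_eq_intros)

lemma deriv_seq_sinh: "deriv_seq (\<lambda>k x. if even k then sinh x else cosh x)"
  unfolding deriv_seq_def by (auto intro!: derivative_eq_intros)

lemma deriv_seq_add: "deriv_seq F \<Longrightarrow> deriv_seq G \<Longrightarrow> deriv_seq (\<lambda>k x. F k x + G k x)"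
  unfolding deriv_seq_def by (auto intro!: derivative_eq_intros)

lemma deriv_seq_cmult: "deriv_seq F \<Longrightarrow> deriv_seq (\<lambda>k x. c * F k x)"
  unfolding deriv_seq_def by (auto intro!: derivative_eq_intros)

lemma deriv_seq_sum:
  "finite I \<Longrightarrow> (\<And>i. i \<in> I \<Longrightarrow> deriv_seq (F i)) \<Longrightarrow> deriv_seq (\<lambda>k x. \<Sum>i\<in>I. F i k x)"
  unfolding deriv_seq_def by (auto intro!: DERIV_sum)

lemma deriv_seq_offset: "deriv_seq F \<Longrightarrow> deriv_seq (\<lambda>k. F (k + m))"
  unfolding deriv_seq_def by auto

lemma deriv_seq_affine: "deriv_seq F \<Longrightarrow> deriv_seq (\<lambda>k x. r ^ k * F k (r * x + y))"
  unfolding deriv_seq_def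
proof (intro allI)
  fix k x
  assume "\<forall>k x. (F k has_real_derivative F (Suc k) x) (at x)"
  then have "(F k has_real_derivative F (Suc k) (r * x + y)) (at (r * x + y))" by blast
  then have "((\<lambda>x. F k (r * x + y)) has_real_derivative F (Suc k) (r * x + y) * r) (at x)"
    by (rule DERIV_chain2) (auto intro!: derivative_eq_intros)
  from DERIV_cmult[OF this, of "r ^ k"]
  show "((\<lambda>x. r ^ k * F k (r * x + y)) has_real_derivative r ^ Suc k * F (Suc k) (r * x + y)) (at x)"
    by (simp add: algebra_simps)
qed

lemma deriv_seq_shift: "deriv_seq F \<Longrightarrow> deriv_seq (\<lambda>k x. F k (x + y))"
  using deriv_seq_affine[of F 1 y] by simp

lemma binomial_convolution_step:
  fixes f g :: "nat \<Rightarrow> 'a::comm_semiring_1"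
  shows "(\<Sum>i\<le>k. of_nat (k choose i) * (f (Suc i) * g (k - i) + f i * g (Suc (k - i))))
       = (\<Sum>i\<le>Suc k. of_nat (Suc k choose i) * f i * g (Suc k - i))"
proof -
  have Pascal: "of_nat (Suc k choose i) * f i * g (Suc k - i)
      = of_nat (k choose i) * f i * g (Suc k - i)
      + of_nat (if i = 0 then 0 else k choose (i - 1)) * f i * g (Suc k - i)" for i
    by (cases i) (simp_all add: distrib_right add.commute)
  have lower: "(\<Sum>i\<le>Suc k. of_nat (k choose i) * f i * g (Suc k - i))
      = (\<Sum>i\<le>k. of_nat (k choose i) * f i * g (Suc (k - i)))"
    by (simp add: Suc_diff_le binomial_eq_0)
  have upper: "(\<Sum>i\<le>Suc k. of_nat (if i = 0 then 0 else k choose (i - 1)) * f i * g (Suc k - i))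
      = (\<Sum>i\<le>k. of_nat (k choose i) * f (Suc i) * g (k - i))"
    by (subst sum.atMost_Suc_shift) simp
  show ?thesis
    unfolding Pascal sum.distrib lower upper by (simp add: sum.distrib algebra_simps)
qed

lemma deriv_seq_mult:
  assumes F: "deriv_seq F" and G: "deriv_seq G"
  shows "deriv_seq (\<lambda>k x. \<Sum>i\<le>k. of_nat (k choose i) * F i x * G (k - i) x)"
  unfolding deriv_seq_def
proof (intro allI)
  fix k x
  have "((\<lambda>x. \<Sum>i\<le>k. of_nat (k choose i) * F i x * G (k - i) x) has_real_derivative
      (\<Sum>i\<le>k. of_nat (k choose i) * (F (Suc i) x * G (k - i) x + F i x * G (Suc (k - i)) x))) (at x)"
    by (rule DERIV_sum, rule DERIV_cong[OF DERIV_mult[OF DERIV_cmult[OF deriv_seqD[OF F]] deriv_seqD[OF G]]])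
      (simp add: algebra_simps)
  then show "((\<lambda>x. \<Sum>i\<le>k. of_nat (k choose i) * F i x * G (k - i) x) has_real_derivative
      (\<Sum>i\<le>Suc k. of_nat (Suc k choose i) * F i x * G (Suc k - i) x)) (at x)"
    using binomial_convolution_step[of k "\<lambda>i. F i x" "\<lambda>i. G i x"] by simp
qed

section \<open>Derivatives of tanh (x / 2)\<close>

fun tanh_deriv_poly :: "nat \<Rightarrow> real poly" where
  "tanh_deriv_poly 0 = [:0, 1:]"
| "tanh_deriv_poly (Suc k) = pderiv (tanh_deriv_poly k) * [:1, 0, -1:]"

lemma deriv_seq_tanh: "deriv_seq (\<lambda>k x. poly (tanh_deriv_poly k) (tanh x))"
  unfolding deriv_seq_def
proof (intro allI)
  fix k x
  have "(tanh has_real_derivative 1 - tanh x ^ 2) (at x)"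
    using has_field_derivative_tanh[OF _ DERIV_ident, of x UNIV] by simp
  from DERIV_chain2[OF poly_DERIV this]
  show "((\<lambda>x. poly (tanh_deriv_poly k) (tanh x)) has_real_derivative
      poly (tanh_deriv_poly (Suc k)) (tanh x)) (at x)"
    by (simp add: power2_eq_square algebra_simps)
qed

lemma tangent_number_eq_poly: "tangent_number k = poly (tanh_deriv_poly k) 0"
  using deriv_seq_funpow_deriv[OF deriv_seq_tanh, of k] unfolding tangent_number_def
  by (simp add: fun_eq_iff)

definition half_tanh_deriv :: "nat \<Rightarrow> real \<Rightarrow> real" where
  "half_tanh_deriv k x = (1/2) ^ k * poly (tanh_deriv_poly k) (tanh (x / 2))"

lemma deriv_seq_half_tanh: "deriv_seq half_tanh_deriv"
  using deriv_seq_affine[OF deriv_seq_tanh, of "1/2" 0]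
  by (simp add: half_tanh_deriv_def[abs_def] mult.commute)

lemma half_tanh_deriv_0: "half_tanh_deriv 0 x = tanh (x / 2)"
  by (simp add: half_tanh_deriv_def)

lemma half_tanh_deriv_at_0: "half_tanh_deriv k 0 = tangent_number k / 2 ^ k"
  by (simp add: half_tanh_deriv_def tangent_number_eq_poly power_one_over)

lemma tanh_half_sum_mult_cosh_sum:
  "tanh ((x + y) / 2) * (cosh x + cosh y) = sinh x + sinh (y::real)"
proof -
  define u v where "u = (x + y) / 2" and "v = (x - y) / 2"
  have x: "x = u + v" and y: "y = u - v" by (simp_all add: u_def v_def field_simps)
  have "cosh x + cosh y = 2 * cosh u * cosh v" and "sinh x + sinh y = 2 * sinh u * cosh v"
    unfolding x y by (simp_all add: cosh_add cosh_diff sinh_add sinh_diff)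
  moreover have "tanh u * cosh u = sinh u"
    using cosh_real_pos[of u] by (simp add: tanh_def)
  ultimately show ?thesis unfolding u_def[symmetric]
    by (metis mult.assoc mult.commute)
qed

lemma half_tanh_deriv_cosh_convolution:
  "(\<Sum>i\<le>a. of_nat (a choose i) * of_bool (even i) * half_tanh_deriv (a - i) y)
     + cosh y * half_tanh_deriv a y = of_bool (odd a) + of_bool (a = 0) * sinh y"
proof -
  \<comment> \<open>a-th x-derivative of tanh ((x + y) / 2) (cosh x + cosh y) = sinh x + sinh y at x = 0\<close>
  define L where "L = (\<lambda>k x. (\<Sum>i\<le>k. of_nat (k choose i) * (if even i then cosh x else sinh x)
      * half_tanh_deriv (k - i) (x + y)) + cosh y * half_tanh_deriv k (x + y))"
  define R where "R = (\<lambda>(k::nat) x. (if even k then sinh x else cosh x) + (if k = 0 then sinh y else 0))"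
  have "deriv_seq L" unfolding L_def
    by (intro deriv_seq_add deriv_seq_cmult deriv_seq_mult deriv_seq_cosh deriv_seq_shift
        deriv_seq_half_tanh)
  moreover have "deriv_seq R" unfolding R_def
    by (intro deriv_seq_add deriv_seq_sinh deriv_seq_const)
  moreover have "L 0 = R 0"
    by (auto simp: L_def R_def fun_eq_iff half_tanh_deriv_0 algebra_simps
        tanh_half_sum_mult_cosh_sum[symmetric])
  ultimately have "L a 0 = R a 0" by (metis deriv_seq_unique)
  moreover have "L a 0 = (\<Sum>i\<le>a. of_nat (a choose i) * of_bool (even i) * half_tanh_deriv (a - i) y)
      + cosh y * half_tanh_deriv a y"
    unfolding L_def by (intro arg_cong2[where f="(+)"] sum.cong) auto
  ultimately show ?thesis by (simp add: R_def)
qed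

lemma half_tanh_coeff_convolution:
  "(\<Sum>i\<le>a. of_nat (a choose i) * of_bool (even i) * half_tanh_deriv (a + b - i) 0)
   + (\<Sum>j\<le>b. of_nat (b choose j) * of_bool (even j) * half_tanh_deriv (a + b - j) 0)
   = of_bool (b = 0 \<and> odd a) + of_bool (a = 0 \<and> odd b)"
proof -
  \<comment> \<open>b-th y-derivative at y = 0 of the previous identity with a fixed\<close>
  define M where "M = (\<lambda>k y. (\<Sum>i\<le>a. of_nat (a choose i) * of_bool (even i) * half_tanh_deriv (k + (a - i)) y)
      + (\<Sum>j\<le>k. of_nat (k choose j) * (if even j then cosh y else sinh y) * half_tanh_deriv (k - j + a) y))"
  define C where "C = (\<lambda>(k::nat) (y::real). (if k = 0 then of_bool (odd a) else 0)
      + of_bool (a = 0) * (if even k then sinh y else cosh y))"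
  have "deriv_seq M" unfolding M_def
    by (intro deriv_seq_add deriv_seq_sum deriv_seq_cmult deriv_seq_mult deriv_seq_cosh
        deriv_seq_offset deriv_seq_half_tanh finite_atMost)
  moreover have "deriv_seq C" unfolding C_def
    by (intro deriv_seq_add deriv_seq_const deriv_seq_cmult deriv_seq_sinh)
  moreover have "M 0 = C 0"
    using half_tanh_deriv_cosh_convolution[of a] by (auto simp: M_def C_def fun_eq_iff algebra_simps)
  ultimately have "M b 0 = C b 0" by (metis deriv_seq_unique)
  moreover have "M b 0 = (\<Sum>i\<le>a. of_nat (a choose i) * of_bool (even i) * half_tanh_deriv (a + b - i) 0)
      + (\<Sum>j\<le>b. of_nat (b choose j) * of_bool (even j) * half_tanh_deriv (a + b - j) 0)"
    unfolding M_def by (intro arg_cong2[where f="(+)"] sum.cong) (auto simp: add.commute)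
  ultimately show ?thesis by (simp add: C_def)
qed

section \<open>Sums over the subsets split by a set\<close>

definition splits :: "'a set \<Rightarrow> 'a set \<Rightarrow> bool" where
  "splits Q S \<longleftrightarrow> S \<inter> Q \<noteq> {} \<and> S - Q \<noteq> {}"

lemma sum_Pow_card:
  fixes h :: "nat \<Rightarrow> 'a::comm_semiring_1"
  assumes "finite A"
  shows "(\<Sum>B\<in>Pow A. h (card B)) = (\<Sum>k\<le>card A. of_nat (card A choose k) * h k)"
proof -
  have "(\<Sum>B\<in>Pow A. h (card B)) = (\<Sum>k\<le>card A. \<Sum>B\<in>{B \<in> Pow A. card B = k}. h (card B))"
    by (rule sum.group[symmetric]) (use assms in \<open>auto intro: card_mono\<close>)
  also have "\<dots> = (\<Sum>k\<le>card A. of_nat (card A choose k) * h k)"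
  proof (rule sum.cong[OF refl])
    fix k
    have "{B \<in> Pow A. card B = k} = {B. B \<subseteq> A \<and> card B = k}" by auto
    then show "(\<Sum>B\<in>{B \<in> Pow A. card B = k}. h (card B)) = of_nat (card A choose k) * h k"
      using n_subsets[OF assms, of k] by simp
  qed
  finally show ?thesis .
qed

lemma sum_Pow_of_bool_subset:
  fixes f :: "'b set \<Rightarrow> 'a::comm_semiring_1"
  assumes "finite A" "A' \<subseteq> A"
  shows "(\<Sum>B\<in>Pow A. f B * of_bool (B \<subseteq> A')) = sum f (Pow A')"
proof -
  have "(\<Sum>B\<in>Pow A. f B * of_bool (B \<subseteq> A')) = (\<Sum>B\<in>Pow A. if B \<subseteq> A' then f B else 0)"
    by (rule sum.cong) auto
  also have "\<dots> = sum f {B \<in> Pow A. B \<subseteq> A'}"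
    by (rule sum.inter_filter[symmetric]) (use assms(1) in simp)
  also have "{B \<in> Pow A. B \<subseteq> A'} = Pow A'" using assms(2) by auto
  finally show ?thesis .
qed

lemma sum_Pow_splits:
  fixes f :: "'b set \<Rightarrow> 'a::comm_ring_1"
  assumes "finite A"
  shows "(\<Sum>B\<in>Pow A. f B * of_bool (splits Q B))
       = sum f (Pow A) - sum f (Pow (A - Q)) - sum f (Pow (A \<inter> Q)) + f {}"
proof -
  have decomp: "of_bool (splits Q B)
      = 1 - of_bool (B \<subseteq> A - Q) - of_bool (B \<subseteq> A \<inter> Q) + (of_bool (B \<subseteq> {}) :: 'a)"
    if "B \<in> Pow A" for B
    using that unfolding splits_def by (cases "B = {}") auto
  have "(\<Sum>B\<in>Pow A. f B * of_bool (splits Q B))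
      = (\<Sum>B\<in>Pow A. f B - f B * of_bool (B \<subseteq> A - Q) - f B * of_bool (B \<subseteq> A \<inter> Q)
          + f B * of_bool (B \<subseteq> {}))"
    by (intro sum.cong refl) (simp only: decomp distrib_left right_diff_distrib mult_1_right)
  also have "\<dots> = sum f (Pow A) - (\<Sum>B\<in>Pow A. f B * of_bool (B \<subseteq> A - Q))
      - (\<Sum>B\<in>Pow A. f B * of_bool (B \<subseteq> A \<inter> Q)) + (\<Sum>B\<in>Pow A. f B * of_bool (B \<subseteq> {}))"
    by (simp only: sum.distrib sum_subtractf)
  finally show ?thesis
    by (simp only: sum_Pow_of_bool_subset assms Diff_subset Int_lower1 empty_subsetI) simp
qed

lemma splits_iff_card:
  "finite S \<Longrightarrow> splits Q S \<longleftrightarrow> card (S \<inter> Q) \<noteq> 0 \<and> card (S - Q) \<noteq> 0"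
  unfolding splits_def by simp

lemma splits_eq_alternating_sum:
  assumes "finite A"
  shows "(of_bool (splits Q A) :: real) = (\<Sum>B\<in>Pow A. (-1) ^ card B * of_bool (splits Q B))"
proof -
  have alt: "(\<Sum>B\<in>Pow S. (-1::real) ^ card B) = of_bool (card S = 0)" if "finite S" for S
    using sum_Pow_card[OF that, of "\<lambda>k. (-1::real) ^ k"] choose_alternating_sum[of "card S"]
    by (auto simp: mult.commute)
  have "card A = card (A \<inter> Q) + card (A - Q)" using card_Int_Diff[OF assms] .
  then show ?thesis
    unfolding sum_Pow_splits[OF assms, of "\<lambda>B. (-1) ^ card B"]
    using assms by (simp only: alt finite_Diff finite_Int disjI1) (simp add: splits_iff_card)
qed

lemma splits_eq_tangent_sum:
  assumes "finite A" and odd: "odd (card A)"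
  shows "(of_bool (splits Q A) :: real) =
    (\<Sum>B\<in>{B. B \<subset> A \<and> even (card B)}.
       tangent_number (card A - card B) / 2 ^ (card A - card B) * of_bool (splits Q B))"
proof -
  define n a b where "n = card A" and "a = card (A \<inter> Q)" and "b = card (A - Q)"
  define h where "h k = of_bool (even k) * half_tanh_deriv (n - k) 0" for k
  define S where "S m = (\<Sum>k\<le>m. of_nat (m choose k) * h k)" for m
  have n: "n = a + b" unfolding n_def a_def b_def using card_Int_Diff[OF assms(1)] .
  have "{B. B \<subset> A \<and> even (card B)} = {B \<in> Pow A. even (card B)}"
    using odd by auto
  then have "(\<Sum>B\<in>{B. B \<subset> A \<and> even (card B)}.
       tangent_number (card A - card B) / 2 ^ (card A - card B) * of_bool (splits Q B))
      = (\<Sum>B\<in>Pow A. if even (card B)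
           then tangent_number (card A - card B) / 2 ^ (card A - card B) * of_bool (splits Q B) else 0)"
    by (simp only: sum.inter_filter assms(1) finite_Pow_iff)
  also have "\<dots> = (\<Sum>B\<in>Pow A. h (card B) * of_bool (splits Q B))"
    by (rule sum.cong) (simp_all add: h_def n_def half_tanh_deriv_at_0)
  also have "\<dots> = S n - S b - S a + h 0"
    unfolding sum_Pow_splits[OF assms(1)] S_def n_def a_def b_def
    using assms(1) by (simp only: sum_Pow_card finite_Diff finite_Int disjI1 card.empty)
  also have "\<dots> = 1 - of_bool (b = 0 \<and> odd a) - of_bool (a = 0 \<and> odd b)"
  proof -
    have "S a + S b = of_bool (b = 0 \<and> odd a) + of_bool (a = 0 \<and> odd b)"
      using half_tanh_coeff_convolution[of a b] unfolding S_def h_def n by (simp only: mult.assoc)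
    moreover have "S n + h 0 = 1"
      using half_tanh_coeff_convolution[of n 0] odd by (simp add: S_def h_def n_def mult.assoc)
    ultimately show ?thesis by simp
  qed
  also have "\<dots> = of_bool (splits Q A)"
    using odd[folded n_def, unfolded n]
    unfolding splits_iff_card[OF assms(1)] a_def[symmetric] b_def[symmetric] by auto
  finally show ?thesis ..
qed

section \<open>Edges of spanning subtrees\<close>

lemma reach_sym: "reach F u v \<Longrightarrow> reach F v u"
proof -
  have "symp (\<lambda>u v. {u, v} \<in> F)" by (auto simp: symp_def insert_commute)
  then have "symp (reach F)" unfolding reach_def by (rule symp_rtranclp)
  then show "reach F u v \<Longrightarrow> reach F v u" by (auto dest: sympD)
qed

lemma reach_trans: "reach F u v \<Longrightarrow> reach F v z \<Longrightarrow> reach F u z"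
  unfolding reach_def by (rule rtranclp_trans)

lemma reach_mono: "F \<subseteq> G \<Longrightarrow> reach F u v \<Longrightarrow> reach G u v"
  unfolding reach_def by (erule rtranclp_mono[THEN predicate2D, rotated]) auto

lemma reach_Diff_edge:
  assumes "reach E u z" "e = {u, v}"
  shows "reach (E - {e}) u z \<or> reach (E - {e}) v z"
  using assms(1) unfolding reach_def
proof (induction rule: rtranclp_induct)
  case (step y z)
  show ?case
  proof (cases "{y, z} = e")
    case True
    then have "z = u \<or> z = v" using assms(2) by (auto simp: doubleton_eq_iff)
    then show ?thesis by auto
  next
    case False
    then have "{y, z} \<in> E - {e}" using step by auto
    with step.IH show ?thesis by (meson rtranclp.rtrancl_into_rtrancl)
  qed
qed simp

lemma span_edges_subset:
  assumes "F \<subseteq> E" and "\<forall>a\<in>S. \<forall>b\<in>S. reach F a b"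
  shows "span_edges E S \<subseteq> F"
  using assms unfolding span_edges_def by blast

lemma span_edges_subset_hub:
  assumes "F \<subseteq> E" and "\<forall>a\<in>S. reach F c a"
  shows "span_edges E S \<subseteq> F"
proof (rule span_edges_subset[OF assms(1)], intro ballI)
  fix a b assume "a \<in> S" "b \<in> S"
  with assms(2) have "reach F a c" "reach F c b" by (auto intro: reach_sym)
  then show "reach F a b" by (rule reach_trans)
qed

lemma span_edges_iff_splits:
  assumes conn: "\<forall>a\<in>V. \<forall>b\<in>V. reach E a b"
    and e: "e \<in> E" "e = {u, v}" "u \<in> V" and S: "S \<subseteq> V"
  shows "e \<in> span_edges E S \<longleftrightarrow> splits {a. reach (E - {e}) u a} S"
proof
  assume "splits {a. reach (E - {e}) u a} S"
  then obtain a b where a: "a \<in> S" "reach (E - {e}) u a" and b: "b \<in> S" "\<not> reach (E - {e}) u b"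
    unfolding splits_def by blast
  show "e \<in> span_edges E S"
    unfolding span_edges_def
  proof (intro InterI CollectI, elim CollectE conjE)
    fix F assume "F \<subseteq> E" "\<forall>a\<in>S. \<forall>b\<in>S. reach F a b"
    then have "e \<notin> F \<Longrightarrow> reach (E - {e}) a b"
      using a(1) b(1) by (auto intro: reach_mono[of F])
    then show "e \<in> F" using a(2) b(2) reach_trans by metis
  qed
next
  assume span: "e \<in> span_edges E S"
  have "\<not> (\<forall>a\<in>S. reach (E - {e}) c a)" for c
    using span_edges_subset_hub[of "E - {e}" E S c] span by blast
  then obtain a b where "a \<in> S" "\<not> reach (E - {e}) u a" "b \<in> S" "\<not> reach (E - {e}) v b"
    by blast
  moreover have "reach E u a" "reach E u b"
    using conn e(3) S calculation by auto
  then have "reach (E - {e}) v a" "reach (E - {e}) u b"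
    using reach_Diff_edge[OF _ e(2)] calculation by blast+
  ultimately show "splits {a. reach (E - {e}) u a} S"
    unfolding splits_def by blast
qed

lemma splits_image: "splits Q (f ` S) \<longleftrightarrow> splits (f -` Q) S"
  unfolding splits_def by blast

lemma PD_eq_sum_splits:
  assumes conn: "\<forall>a\<in>V. \<forall>b\<in>V. reach E a b" and "finite E"
    and edges: "\<forall>e\<in>E. \<exists>u v. e = {u, v} \<and> u \<in> V \<and> v \<in> V" and "phi ` X \<subseteq> V"
  obtains Q where "\<And>B. B \<subseteq> X \<Longrightarrow> PD E w phi B = (\<Sum>e\<in>E. w e * of_bool (splits (Q e) B))"
proof -
  have "\<forall>e\<in>E. \<exists>u v. e = {u, v} \<and> u \<in> V" using edges by blast
  then obtain u where u: "\<forall>e\<in>E. \<exists>v. e = {u e, v} \<and> u e \<in> V"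
    by (auto dest!: bchoice)
  define Q where "Q e = phi -` {a. reach (E - {e}) (u e) a}" for e
  have "PD E w phi B = (\<Sum>e\<in>E. w e * of_bool (splits (Q e) B))" if "B \<subseteq> X" for B
  proof -
    have B: "phi ` B \<subseteq> V" using \<open>B \<subseteq> X\<close> \<open>phi ` X \<subseteq> V\<close> by blast
    have "e \<in> span_edges E (phi ` B) \<longleftrightarrow> splits (Q e) B" if "e \<in> E" for e
    proof -
      obtain v where uv: "e = {u e, v}" "u e \<in> V" using u \<open>e \<in> E\<close> by blast
      show ?thesis
        using span_edges_iff_splits[OF conn \<open>e \<in> E\<close> uv B] by (simp add: Q_def splits_image)
    qed
    moreover have "span_edges E (phi ` B) \<subseteq> E"
      using B conn by (intro span_edges_subset) auto
    then have "PD E w phi B = (\<Sum>e\<in>E \<inter> span_edges E (phi ` B). w e)"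
      unfolding PD_def by (simp add: Int_absorb1)
    ultimately show ?thesis
      using \<open>finite E\<close> by (simp add: sum.inter_restrict of_bool_def if_distrib cong: if_cong)
  qed
  then show ?thesis by (rule that)
qed

lemma linear_splits_identity_transfer:
  fixes f :: "'a set \<Rightarrow> real"
  assumes f: "\<And>B. B \<in> insert A \<B> \<Longrightarrow> f B = (\<Sum>e\<in>E. w e * of_bool (splits (Q e) B))"
    and identity: "\<And>Q. of_bool (splits Q A) = (\<Sum>B\<in>\<B>. c B * of_bool (splits Q B))"
  shows "f A = (\<Sum>B\<in>\<B>. c B * f B)"
proof -
  have "f A = (\<Sum>e\<in>E. \<Sum>B\<in>\<B>. w e * (c B * of_bool (splits (Q e) B)))"
    by (simp add: f identity sum_distrib_left)
  also have "\<dots> = (\<Sum>B\<in>\<B>. c B * f B)"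
    by (subst sum.swap) (simp add: f sum_distrib_left mult.left_commute)
  finally show ?thesis .
qed

theorem theorem3:
  fixes V :: "'v set" and E :: "'v set set" and w :: "'v set \<Rightarrow> real"
    and X :: "'x set" and phi :: "'x \<Rightarrow> 'v"
  assumes tree: "is_tree V E"
    and labels: "bij_betw phi X (leaves V E)"
    and nonneg: "\<forall>e\<in>E. w e \<ge> 0"
  shows "(\<forall>A. A \<subseteq> X \<longrightarrow>
            PD E w phi A = (\<Sum>B\<in>Pow A. (-1) ^ card B * PD E w phi B))
       \<and> (\<forall>A. A \<subseteq> X \<longrightarrow> odd (card A) \<longrightarrow>
            PD E w phi A =
              (\<Sum>B\<in>{B. B \<subset> A \<and> even (card B)}.
                 tangent_number (card A - card B) / 2 ^ (card A - card B) * PD E w phi B))"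
proof -
  have "finite V" and edges: "\<forall>e\<in>E. \<exists>u v. e = {u, v} \<and> u \<in> V \<and> v \<in> V"
    and conn: "\<forall>a\<in>V. \<forall>b\<in>V. reach E a b"
    using tree unfolding is_tree_def by auto
  have "E \<subseteq> Pow V" using edges by auto
  with \<open>finite V\<close> have "finite E" by (simp add: finite_subset)
  have "leaves V E \<subseteq> V" unfolding leaves_def by blast
  then have "finite X" and "phi ` X \<subseteq> V"
    using labels \<open>finite V\<close> by (simp_all add: bij_betw_finite bij_betw_imp_surj_on finite_subset)
  obtain Q where PD: "\<And>B. B \<subseteq> X \<Longrightarrow> PD E w phi B = (\<Sum>e\<in>E. w e * of_bool (splits (Q e) B))"
    using PD_eq_sum_splits[OF conn \<open>finite E\<close> edges \<open>phi ` X \<subseteq> V\<close>] by blast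
  have "PD E w phi A = (\<Sum>B\<in>Pow A. (-1) ^ card B * PD E w phi B)" if A: "A \<subseteq> X" for A
  proof (rule linear_splits_identity_transfer[where Q = Q])
    show "PD E w phi B = (\<Sum>e\<in>E. w e * of_bool (splits (Q e) B))" if "B \<in> insert A (Pow A)" for B
      using that A by (intro PD) auto
  qed (rule splits_eq_alternating_sum[OF finite_subset[OF A \<open>finite X\<close>]])
  moreover have "PD E w phi A = (\<Sum>B\<in>{B. B \<subset> A \<and> even (card B)}.
      tangent_number (card A - card B) / 2 ^ (card A - card B) * PD E w phi B)"
    if A: "A \<subseteq> X" and odd: "odd (card A)" for A
  proof (rule linear_splits_identity_transfer[where Q = Q])
    show "PD E w phi B = (\<Sum>e\<in>E. w e * of_bool (splits (Q e) B))"
      if "B \<in> insert A {B. B \<subset> A \<and> even (card B)}" for B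
      using that A by (intro PD) auto
  qed (rule splits_eq_tangent_sum[OF finite_subset[OF A \<open>finite X\<close>] odd])
  ultimately show ?thesis by blast
qed

end
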